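(* Let $\mathcal X_i=\Delta^{d_i}$ for all $i$. Let $G$ be one of the following: (1) the $\alpha$-divergence $G(\pi_i,\sigma_i)=\frac1{\alpha(1-\alpha)}(1-\sum_j\pi_{ij}^\alpha\sigma_{ij}^{1-\alpha})$ with $\alpha\in(0,1)$; (2) the Rényi divergence $G(\pi_i,\sigma_i)=\frac1{\alpha-1}\ln(\sum_j\pi_{ij}^\alpha\sigma_{ij}^{1-\alpha})$ with $\alpha\in(0,1)$; (3) the reverse KL divergence $G(\pi_i,\sigma_i)=\sum_j\sigma_{ij}\ln(\sigma_{ij}/\pi_{ij})$. Let $\mu>0$ and let $\sigma$ be in the interior of $\mathcal X$. If $\pi^{\mu,\sigma}=\sigma$, then $\sigma$ is a Nash equilibrium of the original (unperturbed) game.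
   Context: Game. Let $N\ge1$. $\Delta^d=\{p\in[0,1]^d:\sum_jp_j=1\}$ denotes the probability simplex, and $\mathcal X=\prod_i\mathcal X_i$. Each $v_i:\mathcal X\to\mathbb R$ is differentiable, with block gradient $\nabla_{\pi_i}v_i$. The game is monotone: $\sum_i\langle\nabla_{\pi_i}v_i(\pi)-\nabla_{\pi_i}v_i(\pi'),\pi_i-\pi_i'\rangle\le0$ for all $\pi,\pi'$. A Nash equilibrium is a $\pi^*$ with $v_i(\pi^* )\ge v_i(\pi_i,\pi^*_{-i})$ for all $i$ and $\pi_i\in\mathcal X_i$. Perturbed equilibrium. For $\mu>0$ and $\sigma\in\mathcal X$, $\pi^{\mu,\sigma}$ is the profile with $\pi_i^{\mu,\sigma}\in\arg\max_{\pi_i\in\mathcal X_i}\{v_i(\pi_i,\pi^{\mu,\sigma}_{-i})-\mu G(\pi_i,\sigma_i)\}$ for all $i$. *)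

theory Defs
  imports "HOL-Analysis.Analysis"
begin

text \<open>Players form a finite type 'n; player i's pure actions are a finite set
  A i of the finite type 'm (so d_i = card (A i)). A mixed strategy of player i
  is a vector in real^'m supported on A i; a profile is a real^'m^'n.\<close>

definition prob_simplex :: "'m::finite set \<Rightarrow> (real^'m) set" where
  "prob_simplex A = {p. (\<forall>j. 0 \<le> p$j) \<and> (\<forall>j. j \<notin> A \<longrightarrow> p$j = 0) \<and> (\<Sum>j\<in>A. p$j) = 1}"

definition profiles :: "('n::finite \<Rightarrow> 'm::finite set) \<Rightarrow> (real^'m^'n) set" where
  "profiles A = {\<pi>. \<forall>i. \<pi>$i \<in> prob_simplex (A i)}"

definition upd :: "real^'m^'n \<Rightarrow> 'n \<Rightarrow> real^'m \<Rightarrow> real^'m^'n" where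
  "upd \<pi> i p = (\<chi> k. if k = i then p else \<pi>$k)"

definition block_grad :: "('n::finite \<Rightarrow> real^'m^'n \<Rightarrow> real) \<Rightarrow> 'n \<Rightarrow> real^'m^'n \<Rightarrow> real^'m::finite" where
  "block_grad v i \<pi> = (\<chi> j. frechet_derivative (\<lambda>p. v i (upd \<pi> i p)) (at (\<pi>$i)) (axis j 1))"

definition monotone_game :: "('n::finite \<Rightarrow> 'm::finite set) \<Rightarrow> ('n \<Rightarrow> real^'m^'n \<Rightarrow> real) \<Rightarrow> bool" where
  "monotone_game A v \<longleftrightarrow> (\<forall>\<pi>\<in>profiles A. \<forall>\<pi>'\<in>profiles A.
      (\<Sum>i\<in>UNIV. (block_grad v i \<pi> - block_grad v i \<pi>') \<bullet> (\<pi>$i - \<pi>'$i)) \<le> 0)"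

definition nash_eq :: "('n::finite \<Rightarrow> 'm::finite set) \<Rightarrow> ('n \<Rightarrow> real^'m^'n \<Rightarrow> real) \<Rightarrow> real^'m^'n \<Rightarrow> bool" where
  "nash_eq A v \<pi> \<longleftrightarrow> \<pi> \<in> profiles A \<and> (\<forall>i. \<forall>p\<in>prob_simplex (A i). v i (upd \<pi> i p) \<le> v i \<pi>)"

definition alpha_div :: "real \<Rightarrow> 'm::finite set \<Rightarrow> real^'m \<Rightarrow> real^'m \<Rightarrow> ereal" where
  "alpha_div \<alpha> A p s = ereal (1 / (\<alpha> * (1 - \<alpha>)) * (1 - (\<Sum>j\<in>A. (p$j) powr \<alpha> * (s$j) powr (1 - \<alpha>))))"

definition renyi_div :: "real \<Rightarrow> 'm::finite set \<Rightarrow> real^'m \<Rightarrow> real^'m \<Rightarrow> ereal" where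
  "renyi_div \<alpha> A p s = (let S = (\<Sum>j\<in>A. (p$j) powr \<alpha> * (s$j) powr (1 - \<alpha>)) in
     if S = 0 then \<infinity> else ereal (1 / (\<alpha> - 1) * ln S))"

definition rev_kl :: "'m::finite set \<Rightarrow> real^'m \<Rightarrow> real^'m \<Rightarrow> ereal" where
  "rev_kl A p s = (if \<forall>j\<in>A. 0 < s$j \<longrightarrow> 0 < p$j
     then ereal (\<Sum>j\<in>A. s$j * ln (s$j / p$j)) else \<infinity>)"

text \<open>pi is a perturbed equilibrium pi^{mu,sigma}: each pi_i maximizes
  v_i(., pi_{-i}) - mu G(., sigma_i) over player i's prob_simplex.\<close>
definition perturbed_eq :: "('n::finite \<Rightarrow> 'm::finite set) \<Rightarrow> ('n \<Rightarrow> real^'m^'n \<Rightarrow> real)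
    \<Rightarrow> ('m set \<Rightarrow> real^'m \<Rightarrow> real^'m \<Rightarrow> ereal) \<Rightarrow> real \<Rightarrow> real^'m^'n \<Rightarrow> real^'m^'n \<Rightarrow> bool" where
  "perturbed_eq A v G \<mu> \<sigma> \<pi> \<longleftrightarrow> \<pi> \<in> profiles A \<and>
     (\<forall>i. \<forall>p\<in>prob_simplex (A i).
        ereal (v i (upd \<pi> i p)) - ereal \<mu> * G (A i) p (\<sigma>$i)
          \<le> ereal (v i \<pi>) - ereal \<mu> * G (A i) (\<pi>$i) (\<sigma>$i))"

end

theory Submission
  imports Defs
begin

text \<open>Fix a player \<open>i\<close>, a strategy \<open>p\<close> and put \<open>e = p - \<sigma>\<^sub>i\<close>. For each of the three
  divergences, \<open>t \<mapsto> G(\<sigma>\<^sub>i + t e, \<sigma>\<^sub>i)\<close> is differentiable at \<open>0\<close> with value and derivative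
  \<open>0\<close>, so the perturbation is invisible to first order at \<open>\<sigma>\<close> and the fixed point property
  yields the variational inequality \<open>\<langle>\<nabla>v\<^sub>i(\<sigma>), e\<rangle> \<le> 0\<close> for the block gradient. By
  monotonicity of the game, the derivative of \<open>v\<^sub>i\<close> in direction \<open>e\<close> can only decrease along
  the segment from \<open>\<sigma>\<close> to the unilateral deviation to \<open>p\<close>, so \<open>v\<^sub>i\<close> does not increase
  along it.\<close>

definition block_embed :: "'n \<Rightarrow> real^'m \<Rightarrow> real^'m^'n" where
  "block_embed i e = (\<chi> k. if k = i then e else 0)"

lemma linear_block_embed: "linear (block_embed i)"
  by (rule linearI) (auto simp: block_embed_def vec_eq_iff)

lemma upd_nth_self [simp]: "upd \<pi> i (\<pi>$i) = \<pi>"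
  by (auto simp: upd_def vec_eq_iff)

lemma upd_nth [simp]: "upd \<pi> i q $ k = (if k = i then q else \<pi>$k)"
  by (simp add: upd_def)

lemma linear_eq_sum_axis:
  fixes f :: "real^'m::finite \<Rightarrow> real"
  assumes "linear f"
  shows "f x = (\<Sum>j\<in>UNIV. x$j * f (axis j 1))"
proof -
  have "f x = f (\<Sum>j\<in>UNIV. x$j *\<^sub>R axis j 1)"
    using basis_expansion[of x] by (simp add: scalar_mult_eq_scaleR)
  also have "\<dots> = (\<Sum>j\<in>UNIV. x$j * f (axis j 1))"
    using assms by (simp add: linear_sum linear_scale)
  finally show ?thesis .
qed

lemma block_grad_inner:
  assumes "v i differentiable (at \<pi>)"
  shows "block_grad v i \<pi> \<bullet> e = frechet_derivative (v i) (at \<pi>) (block_embed i e)"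
proof -
  let ?L = "frechet_derivative (v i) (at \<pi>)"
  have L: "(v i has_derivative ?L) (at \<pi>)"
    using assms frechet_derivative_works by blast
  have upd_affine: "upd \<pi> i = (\<lambda>p. block_embed i p + upd \<pi> i 0)"
    by (auto simp: upd_def block_embed_def vec_eq_iff)
  have "((\<lambda>p. block_embed i p + upd \<pi> i 0) has_derivative block_embed i) (at (\<pi>$i))"
    using linear_block_embed
    by (intro has_derivative_add_const bounded_linear_imp_has_derivative)
      (simp add: linear_conv_bounded_linear)
  then have "((\<lambda>p. upd \<pi> i p) has_derivative block_embed i) (at (\<pi>$i))"
    by (subst upd_affine)
  from diff_chain_at[OF this, of "v i" ?L] L
  have "((\<lambda>p. v i (upd \<pi> i p)) has_derivative ?L \<circ> block_embed i) (at (\<pi>$i))"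
    by (simp add: comp_def)
  then have "frechet_derivative (\<lambda>p. v i (upd \<pi> i p)) (at (\<pi>$i)) = ?L \<circ> block_embed i"
    by (rule frechet_derivative_at[symmetric])
  moreover have "linear (?L \<circ> block_embed i)"
    using L has_derivative_linear linear_block_embed linear_compose by blast
  ultimately show ?thesis
    using linear_eq_sum_axis[of "?L \<circ> block_embed i" e]
    by (simp add: block_grad_def inner_vec_def mult.commute)
qed

lemma has_real_derivative_along_upd:
  assumes "v i differentiable (at (upd \<pi> i (q + t *\<^sub>R e)))"
  shows "((\<lambda>t. v i (upd \<pi> i (q + t *\<^sub>R e))) has_real_derivative
           block_grad v i (upd \<pi> i (q + t *\<^sub>R e)) \<bullet> e) (at t)"
proof -
  let ?D = "frechet_derivative (v i) (at (upd \<pi> i (q + t *\<^sub>R e)))"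
  have D: "(v i has_derivative ?D) (at (upd \<pi> i (q + t *\<^sub>R e)))"
    using assms frechet_derivative_works by blast
  have upd_line: "upd \<pi> i (q + s *\<^sub>R e) = upd \<pi> i q + s *\<^sub>R block_embed i e" for s
    by (auto simp: upd_def block_embed_def vec_eq_iff)
  have "((\<lambda>s. upd \<pi> i (q + s *\<^sub>R e)) has_derivative (\<lambda>h. h *\<^sub>R block_embed i e)) (at t)"
    unfolding upd_line by (auto intro!: derivative_eq_intros)
  from diff_chain_at[OF this D]
  have "((\<lambda>s. v i (upd \<pi> i (q + s *\<^sub>R e))) has_derivative (\<lambda>h. ?D (block_embed i e) * h)) (at t)"
    using linear_scale[OF has_derivative_linear[OF D]] by (simp add: o_def mult.commute)
  then show ?thesis
    unfolding has_field_derivative_def block_grad_inner[of v i, OF assms] .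
qed

lemma has_real_derivative_nonpos_at_right_max:
  fixes f :: "real \<Rightarrow> real"
  assumes "(f has_real_derivative D) (at x)" and "0 < d"
    and "\<And>h. 0 < h \<Longrightarrow> h < d \<Longrightarrow> f (x + h) \<le> f x"
  shows "D \<le> 0"
proof (rule ccontr)
  assume "\<not> D \<le> 0"
  with DERIV_pos_inc_right[OF assms(1)] obtain d' where "0 < d'"
    and inc: "\<And>h. 0 < h \<Longrightarrow> h < d' \<Longrightarrow> f x < f (x + h)" by auto
  define h where "h = min d d' / 2"
  have "0 < h" "h < d" "h < d'"
    using \<open>0 < d\<close> \<open>0 < d'\<close> by (auto simp: h_def)
  with assms(3) inc show False by fastforce
qed

lemma segment_in_prob_simplex:
  assumes "s \<in> prob_simplex A" "p \<in> prob_simplex A" "0 \<le> t" "t \<le> 1"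
  shows "s + t *\<^sub>R (p - s) \<in> prob_simplex A"
proof -
  have "(\<Sum>j\<in>A. (1 - t) * s$j + t * p$j) = (1 - t) * (\<Sum>j\<in>A. s$j) + t * (\<Sum>j\<in>A. p$j)"
    by (simp add: sum.distrib sum_distrib_left)
  moreover have "0 \<le> (1 - t) * s$j + t * p$j" for j
    using assms by (simp add: prob_simplex_def)
  ultimately show ?thesis
    using assms by (auto simp: prob_simplex_def algebra_simps)
qed

lemma upd_in_profiles:
  "\<pi> \<in> profiles A \<Longrightarrow> q \<in> prob_simplex (A i) \<Longrightarrow> upd \<pi> i q \<in> profiles A"
  by (simp add: profiles_def)

lemma monotone_game_unilateral:
  assumes "monotone_game A v" "\<pi> \<in> profiles A" "q \<in> prob_simplex (A i)"
  shows "(block_grad v i (upd \<pi> i q) - block_grad v i \<pi>) \<bullet> (q - \<pi>$i) \<le> 0"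
proof -
  have "(\<Sum>k\<in>UNIV. (block_grad v k (upd \<pi> i q) - block_grad v k \<pi>) \<bullet> (upd \<pi> i q $ k - \<pi>$k)) \<le> 0"
    using assms upd_in_profiles unfolding monotone_game_def by blast
  moreover have "(\<Sum>k\<in>UNIV. (block_grad v k (upd \<pi> i q) - block_grad v k \<pi>) \<bullet> (upd \<pi> i q $ k - \<pi>$k))
      = (block_grad v i (upd \<pi> i q) - block_grad v i \<pi>) \<bullet> (q - \<pi>$i)"
    by (subst sum.remove[of _ i]) auto
  ultimately show ?thesis by simp
qed

lemma nash_eq_if_variational_inequality:
  assumes diff: "\<And>i \<pi>. \<pi> \<in> profiles A \<Longrightarrow> v i differentiable (at \<pi>)"
    and mono: "monotone_game A v" and prof: "\<sigma> \<in> profiles A"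
    and vi: "\<And>i p. p \<in> prob_simplex (A i) \<Longrightarrow> block_grad v i \<sigma> \<bullet> (p - \<sigma>$i) \<le> 0"
  shows "nash_eq A v \<sigma>"
  unfolding nash_eq_def
proof (intro conjI allI ballI prof)
  fix i p assume p: "p \<in> prob_simplex (A i)"
  define e where "e = p - \<sigma>$i"
  define \<pi> where "\<pi> t = upd \<sigma> i (\<sigma>$i + t *\<^sub>R e)" for t
  have s: "\<sigma>$i \<in> prob_simplex (A i)"
    using prof by (simp add: profiles_def)
  have seg: "\<sigma>$i + t *\<^sub>R e \<in> prob_simplex (A i)" if "0 \<le> t" "t \<le> 1" for t
    using segment_in_prob_simplex[OF s p that] by (simp add: e_def)
  have descent: "block_grad v i (\<pi> t) \<bullet> e \<le> 0" if "0 \<le> t" "t \<le> 1" for t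
  proof (cases "t = 0")
    case True
    then show ?thesis using vi[OF p] by (simp add: \<pi>_def e_def)
  next
    case False
    have "t * ((block_grad v i (\<pi> t) - block_grad v i \<sigma>) \<bullet> e) \<le> 0"
      using monotone_game_unilateral[OF mono prof seg[OF that]] by (simp add: \<pi>_def)
    with False that have "block_grad v i (\<pi> t) \<bullet> e \<le> block_grad v i \<sigma> \<bullet> e"
      by (simp add: mult_le_0_iff inner_diff_left)
    with vi[OF p] show ?thesis by (simp add: e_def)
  qed
  have "v i (\<pi> 1) \<le> v i (\<pi> 0)"
  proof (rule DERIV_nonpos_imp_nonincreasing[of 0 1 "\<lambda>t. v i (\<pi> t)"])
    fix t :: real assume "0 \<le> t" "t \<le> 1"
    with descent diff upd_in_profiles[OF prof seg] has_real_derivative_along_upd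
    show "\<exists>D. ((\<lambda>t. v i (\<pi> t)) has_real_derivative D) (at t) \<and> D \<le> 0"
      unfolding \<pi>_def by blast
  qed simp
  then show "v i (upd \<sigma> i p) \<le> v i \<sigma>"
    by (simp add: \<pi>_def e_def)
qed

definition stationary_along ::
    "('m::finite set \<Rightarrow> real^'m \<Rightarrow> real^'m \<Rightarrow> ereal) \<Rightarrow> 'm set \<Rightarrow> real^'m \<Rightarrow> real^'m \<Rightarrow> bool" where
  "stationary_along G A s e \<longleftrightarrow> (\<exists>\<phi>. (\<phi> has_real_derivative 0) (at 0) \<and> \<phi> 0 = 0 \<and>
     (\<forall>t. (\<forall>j\<in>A. 0 < s$j + t * e$j) \<longrightarrow> G A (s + t *\<^sub>R e) s = ereal (\<phi> t)))"

definition alpha_affinity :: "real \<Rightarrow> 'm::finite set \<Rightarrow> real^'m \<Rightarrow> real^'m \<Rightarrow> real" where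
  "alpha_affinity \<alpha> A p s = (\<Sum>j\<in>A. (p$j) powr \<alpha> * (s$j) powr (1 - \<alpha>))"

lemma alpha_affinity_self:
  assumes "\<And>j. j \<in> A \<Longrightarrow> 0 < s$j" "(\<Sum>j\<in>A. s$j) = 1"
  shows "alpha_affinity \<alpha> A s s = 1"
proof -
  have "alpha_affinity \<alpha> A s s = (\<Sum>j\<in>A. s$j)"
    unfolding alpha_affinity_def
    by (rule sum.cong) (auto simp: assms(1) powr_add[symmetric] less_imp_le)
  with assms(2) show ?thesis by simp
qed

lemma alpha_affinity_has_derivative_zero:
  assumes pos: "\<And>j. j \<in> A \<Longrightarrow> 0 < s$j" and e0: "(\<Sum>j\<in>A. e$j) = 0"
  shows "((\<lambda>t. alpha_affinity \<alpha> A (s + t *\<^sub>R e) s) has_real_derivative 0) (at 0)"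
proof -
  have "((\<lambda>t. alpha_affinity \<alpha> A (s + t *\<^sub>R e) s) has_real_derivative
          (\<Sum>j\<in>A. \<alpha> * (s$j) powr (\<alpha> - 1) * e$j * (s$j) powr (1 - \<alpha>))) (at 0)"
    unfolding alpha_affinity_def using pos by (auto intro!: derivative_eq_intros sum.cong)
  moreover have "(\<Sum>j\<in>A. \<alpha> * (s$j) powr (\<alpha> - 1) * e$j * (s$j) powr (1 - \<alpha>)) = \<alpha> * (\<Sum>j\<in>A. e$j)"
    unfolding sum_distrib_left
  proof (rule sum.cong)
    fix j assume "j \<in> A"
    then have "(s$j) powr (\<alpha> - 1) * (s$j) powr (1 - \<alpha>) = 1"
      using pos[OF \<open>j \<in> A\<close>] by (simp add: powr_add[symmetric])
    then show "\<alpha> * (s$j) powr (\<alpha> - 1) * e$j * (s$j) powr (1 - \<alpha>) = \<alpha> * e$j"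
      by (metis mult.commute mult.left_commute mult_1_right)
  qed simp
  ultimately show ?thesis using e0 by simp
qed

lemma stationary_along_alpha_div:
  assumes "0 < \<alpha>" "\<alpha> < 1" "\<And>j. j \<in> A \<Longrightarrow> 0 < s$j" "(\<Sum>j\<in>A. s$j) = 1" "(\<Sum>j\<in>A. e$j) = 0"
  shows "stationary_along (alpha_div \<alpha>) A s e"
  unfolding stationary_along_def
proof (intro exI conjI allI impI)
  let ?\<phi> = "\<lambda>t. 1 / (\<alpha> * (1 - \<alpha>)) * (1 - alpha_affinity \<alpha> A (s + t *\<^sub>R e) s)"
  show "(?\<phi> has_real_derivative 0) (at 0)"
    using alpha_affinity_has_derivative_zero[OF assms(3,5)] assms(1,2)
    by (auto intro!: derivative_eq_intros)
  show "?\<phi> 0 = 0"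
    using alpha_affinity_self[OF assms(3,4)] by simp
  show "alpha_div \<alpha> A (s + t *\<^sub>R e) s = ereal (?\<phi> t)" for t
    by (simp add: alpha_div_def alpha_affinity_def)
qed

lemma stationary_along_renyi_div:
  assumes "0 < \<alpha>" "\<alpha> < 1" "\<And>j. j \<in> A \<Longrightarrow> 0 < s$j" "(\<Sum>j\<in>A. s$j) = 1" "(\<Sum>j\<in>A. e$j) = 0"
  shows "stationary_along (renyi_div \<alpha>) A s e"
  unfolding stationary_along_def
proof (intro exI conjI allI impI)
  let ?\<phi> = "\<lambda>t. 1 / (\<alpha> - 1) * ln (alpha_affinity \<alpha> A (s + t *\<^sub>R e) s)"
  show "(?\<phi> has_real_derivative 0) (at 0)"
    using alpha_affinity_has_derivative_zero[OF assms(3,5)] alpha_affinity_self[OF assms(3,4)] assms(1,2)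
    by (auto intro!: derivative_eq_intros)
  show "?\<phi> 0 = 0"
    using alpha_affinity_self[OF assms(3,4)] by simp
  fix t assume pos: "\<forall>j\<in>A. 0 < s$j + t * e$j"
  have "A \<noteq> {}"
    using assms(4) by auto
  moreover have "0 < (s$j + t * e$j) powr \<alpha> * (s$j) powr (1 - \<alpha>)" if "j \<in> A" for j
  proof -
    have "0 < s$j + t * e$j" "0 < s$j"
      using pos assms(3) that by auto
    then show ?thesis by simp
  qed
  ultimately have "0 < alpha_affinity \<alpha> A (s + t *\<^sub>R e) s"
    unfolding alpha_affinity_def by (intro sum_pos) auto
  then show "renyi_div \<alpha> A (s + t *\<^sub>R e) s = ereal (?\<phi> t)"
    by (simp add: renyi_div_def alpha_affinity_def Let_def)
qed

lemma stationary_along_rev_kl: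
  assumes pos: "\<And>j. j \<in> A \<Longrightarrow> 0 < s$j" and e0: "(\<Sum>j\<in>A. e$j) = 0"
  shows "stationary_along rev_kl A s e"
  unfolding stationary_along_def
proof (intro exI conjI allI impI)
  let ?\<phi> = "\<lambda>t. \<Sum>j\<in>A. s$j * (ln (s$j) - ln (s$j + t * e$j))"
  have "(?\<phi> has_real_derivative (\<Sum>j\<in>A. s$j * (0 - e$j * inverse (s$j)))) (at 0)"
    using pos by (auto intro!: derivative_eq_intros sum.cong)
  moreover have "(\<Sum>j\<in>A. s$j * (0 - e$j * inverse (s$j))) = - (\<Sum>j\<in>A. e$j)"
    unfolding sum_negf[symmetric] by (rule sum.cong) (auto dest: pos)
  ultimately show "(?\<phi> has_real_derivative 0) (at 0)"
    using e0 by simp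
  show "?\<phi> 0 = 0"
    by simp
  fix t assume "\<forall>j\<in>A. 0 < s$j + t * e$j"
  then have "(\<Sum>j\<in>A. s$j * ln (s$j / (s + t *\<^sub>R e)$j)) = ?\<phi> t"
    using pos by (intro sum.cong) (auto simp: ln_div)
  then show "rev_kl A (s + t *\<^sub>R e) s = ereal (?\<phi> t)"
    using \<open>\<forall>j\<in>A. 0 < s$j + t * e$j\<close> by (simp add: rev_kl_def)
qed

lemma variational_inequality_if_perturbed_fixed_point:
  assumes diff: "v i differentiable (at \<sigma>)"
    and prof: "\<sigma> \<in> profiles A"
    and int: "\<And>j. j \<in> A i \<Longrightarrow> 0 < \<sigma>$i$j"
    and fixed: "perturbed_eq A v G \<mu> \<sigma> \<sigma>"
    and p: "p \<in> prob_simplex (A i)"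
    and stat: "stationary_along G (A i) (\<sigma>$i) (p - \<sigma>$i)"
  shows "block_grad v i \<sigma> \<bullet> (p - \<sigma>$i) \<le> 0"
proof -
  define e where "e = p - \<sigma>$i"
  obtain \<phi> where \<phi>': "(\<phi> has_real_derivative 0) (at 0)" and \<phi>0: "\<phi> 0 = 0"
    and G\<phi>: "\<And>t. \<forall>j\<in>A i. 0 < \<sigma>$i$j + t * e$j \<Longrightarrow> G (A i) (\<sigma>$i + t *\<^sub>R e) (\<sigma>$i) = ereal (\<phi> t)"
    using stat unfolding stationary_along_def e_def by blast
  define f where "f t = v i (upd \<sigma> i (\<sigma>$i + t *\<^sub>R e)) - \<mu> * \<phi> t" for t
  have "(f has_real_derivative block_grad v i \<sigma> \<bullet> e - \<mu> * 0) (at 0)"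
    unfolding f_def using has_real_derivative_along_upd[of v i \<sigma> "\<sigma>$i" 0 e] diff \<phi>'
    by (auto intro!: derivative_eq_intros)
  moreover have "f t \<le> f 0" if "0 < t" "t < 1" for t
  proof -
    have "0 < \<sigma>$i$j + t * e$j" if "j \<in> A i" for j
    proof -
      have "0 \<le> p$j" using p by (simp add: prob_simplex_def)
      with \<open>0 < t\<close> \<open>t < 1\<close> int[OF that]
      have "0 < (1 - t) * \<sigma>$i$j + t * p$j" by (simp add: add_pos_nonneg)
      then show ?thesis by (simp add: e_def algebra_simps)
    qed
    then have "G (A i) (\<sigma>$i + t *\<^sub>R e) (\<sigma>$i) = ereal (\<phi> t)"
      and "G (A i) (\<sigma>$i) (\<sigma>$i) = ereal 0"
      using G\<phi>[of t] G\<phi>[of 0] int \<phi>0 by auto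
    moreover have "\<sigma>$i + t *\<^sub>R e \<in> prob_simplex (A i)"
      using segment_in_prob_simplex[of "\<sigma>$i" "A i" p t] prof p that
      by (simp add: profiles_def e_def)
    with fixed have "ereal (v i (upd \<sigma> i (\<sigma>$i + t *\<^sub>R e))) - ereal \<mu> * G (A i) (\<sigma>$i + t *\<^sub>R e) (\<sigma>$i)
        \<le> ereal (v i \<sigma>) - ereal \<mu> * G (A i) (\<sigma>$i) (\<sigma>$i)"
      unfolding perturbed_eq_def by blast
    ultimately show ?thesis
      using \<phi>0 by (simp add: f_def)
  qed
  ultimately show ?thesis
    using has_real_derivative_nonpos_at_right_max[of f _ 0 1] by (simp add: e_def)
qed

theorem lemma17:
  fixes A :: "'n::finite \<Rightarrow> 'm::finite set"
    and v :: "'n \<Rightarrow> real^'m^'n \<Rightarrow> real"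
    and G :: "'m set \<Rightarrow> real^'m \<Rightarrow> real^'m \<Rightarrow> ereal"
    and \<mu> :: real and \<sigma> :: "real^'m^'n"
  assumes diff: "\<And>i \<pi>. \<pi> \<in> profiles A \<Longrightarrow> v i differentiable (at \<pi>)"
    and mono: "monotone_game A v"
    and G_choice: "(\<exists>\<alpha>. 0 < \<alpha> \<and> \<alpha> < 1 \<and> (G = alpha_div \<alpha> \<or> G = renyi_div \<alpha>)) \<or> G = rev_kl"
    and mu_pos: "\<mu> > 0"
    and sigma_prof: "\<sigma> \<in> profiles A"
    and sigma_int: "\<And>i j. j \<in> A i \<Longrightarrow> 0 < \<sigma>$i$j"
    and fixed: "perturbed_eq A v G \<mu> \<sigma> \<sigma>"
  shows "nash_eq A v \<sigma>"
proof (rule nash_eq_if_variational_inequality[OF diff mono sigma_prof])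
  fix i p assume p: "p \<in> prob_simplex (A i)"
  have s: "\<sigma>$i \<in> prob_simplex (A i)"
    using sigma_prof by (simp add: profiles_def)
  then have s1: "(\<Sum>j\<in>A i. \<sigma>$i$j) = 1" and e0: "(\<Sum>j\<in>A i. (p - \<sigma>$i)$j) = 0"
    using p by (simp_all add: prob_simplex_def sum_subtractf)
  have "stationary_along G (A i) (\<sigma>$i) (p - \<sigma>$i)"
    using G_choice stationary_along_alpha_div[OF _ _ sigma_int s1 e0]
      stationary_along_renyi_div[OF _ _ sigma_int s1 e0] stationary_along_rev_kl[OF sigma_int e0]
    by blast
  then show "block_grad v i \<sigma> \<bullet> (p - \<sigma>$i) \<le> 0"
    using variational_inequality_if_perturbed_fixed_point[of v i \<sigma> A G \<mu> p]
      diff[OF sigma_prof] sigma_prof sigma_int fixed p by blast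
qed

end
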